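(* Let $\mathcal{G}$ be a GBS graph of groups, $w=a_0^{k_0}y_1a_1^{k_1}\cdots y_na_n^{k_n}$ a $\mathcal{G}$-factorization, and $0\le i\le j\le n$. Then $w_{i,j}=a_i^{k_i}y_{i+1}a_{i+1}^{k_{i+1}}\cdots y_ja_j^{k_j}$ represents an element of $\langle a_i\rangle\le F(\mathcal{G})$ if and only if $w_{i,j}=a_i^{k_{i,j}}$ in $F(\mathcal{G})$, where $$k_{i,j}=\sum_{\nu=i}^{j}k_\nu\cdot\prod_{\mu=i+1}^{\nu}\frac{\alpha_\mu}{\beta_\mu}\in\mathbb{Q},\qquad \alpha_\mu=\alpha_{y_\mu},\ \beta_\mu=\beta_{y_\mu}.$$
   Context: $\mathcal{G}$ consists of a finite connected graph $Y$ (vertices $V(Y)$, edges $E(Y)$, maps $\iota,\tau:E(Y)\to V(Y)$, fixed-point-free involution $y\mapsto\bar y$ with $\iota(\bar y)=\tau(y)$) and integers $\alpha_y,\beta_y\in\mathbb{Z}\setminus\{0\}$ with $\alpha_y=\beta_{\bar y}$. $F(\mathcal{G})$ is the group with generators $V(Y)\cup E(Y)$ and relations $\bar yy=1$, $y\,b^{\beta_y}\bar y=a^{\alpha_y}$ for each $y\in E(Y)$ with $a=\iota(y)$, $b=\tau(y)$. A $\mathcal{G}$-factorization is a word $a_0^{k_0}y_1a_1^{k_1}\cdots y_na_n^{k_n}$ with $y_i\in E(Y)$, $a_i\in V(Y)$, $k_i\in\mathbb{Z}$, $\iota(y_i)=a_{i-1}$, $\tau(y_i)=a_i$ and $a_n=a_0$.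 The statement $w_{i,j}=a_i^{k_{i,j}}$ includes that $k_{i,j}$ is an integer. *)

theory Defs
  imports Complex_Main
begin

(* Letters of words in the generators: (generator, inverted?) *)
type_synonym 'g letter = "'g \<times> bool"

definition gpow :: "'g \<Rightarrow> int \<Rightarrow> 'g letter list" where
  "gpow x k = (if 0 \<le> k then replicate (nat k) (x, False) else replicate (nat (- k)) (x, True))"

inductive pres_eq :: "'g letter list set \<Rightarrow> 'g letter list \<Rightarrow> 'g letter list \<Rightarrow> bool"
  for R :: "'g letter list set" where
  pe_refl: "pres_eq R u u"
| pe_sym: "pres_eq R u v \<Longrightarrow> pres_eq R v u"
| pe_trans: "pres_eq R u v \<Longrightarrow> pres_eq R v w \<Longrightarrow> pres_eq R u w"
| pe_ctxt: "pres_eq R u v \<Longrightarrow> pres_eq R (p @ u @ q) (p @ v @ q)"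
| pe_cancel: "pres_eq R [(x, b), (x, \<not> b)] []"
| pe_rel: "r \<in> R \<Longrightarrow> pres_eq R r []"

definition gbs_graph ::
  "'v set \<Rightarrow> 'e set \<Rightarrow> ('e \<Rightarrow> 'v) \<Rightarrow> ('e \<Rightarrow> 'v) \<Rightarrow> ('e \<Rightarrow> 'e)
   \<Rightarrow> ('e \<Rightarrow> int) \<Rightarrow> ('e \<Rightarrow> int) \<Rightarrow> bool" where
  "gbs_graph V E \<iota> \<tau> bar \<alpha> \<beta> \<longleftrightarrow>
     finite V \<and> finite E \<and> V \<noteq> {} \<and>
     (\<forall>y\<in>E. \<iota> y \<in> V \<and> \<tau> y \<in> V \<and> bar y \<in> E \<and> bar y \<noteq> y \<and> bar (bar y) = y
        \<and> \<iota> (bar y) = \<tau> y \<and> \<alpha> y \<noteq> 0 \<and> \<beta> y \<noteq> 0 \<and> \<alpha> y = \<beta> (bar y)) \<and>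
     (\<forall>u\<in>V. \<forall>v\<in>V. (u, v) \<in> {(\<iota> y, \<tau> y) | y. y \<in> E}\<^sup>*)"

definition gbs_rels ::
  "'e set \<Rightarrow> ('e \<Rightarrow> 'v) \<Rightarrow> ('e \<Rightarrow> 'v) \<Rightarrow> ('e \<Rightarrow> 'e)
   \<Rightarrow> ('e \<Rightarrow> int) \<Rightarrow> ('e \<Rightarrow> int) \<Rightarrow> ('v + 'e) letter list set" where
  "gbs_rels E \<iota> \<tau> bar \<alpha> \<beta> =
     {[(Inr (bar y), False), (Inr y, False)] | y. y \<in> E} \<union>
     {[(Inr y, False)] @ gpow (Inl (\<tau> y)) (\<beta> y) @ [(Inr (bar y), False)]
        @ gpow (Inl (\<iota> y)) (- \<alpha> y) | y. y \<in> E}"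

definition gbs_factorization ::
  "'v set \<Rightarrow> 'e set \<Rightarrow> ('e \<Rightarrow> 'v) \<Rightarrow> ('e \<Rightarrow> 'v)
   \<Rightarrow> nat \<Rightarrow> (nat \<Rightarrow> 'v) \<Rightarrow> (nat \<Rightarrow> int) \<Rightarrow> (nat \<Rightarrow> 'e) \<Rightarrow> bool" where
  "gbs_factorization V E \<iota> \<tau> n a k y \<longleftrightarrow>
     (\<forall>i\<le>n. a i \<in> V) \<and>
     (\<forall>i\<in>{1..n}. y i \<in> E \<and> \<iota> (y i) = a (i - 1) \<and> \<tau> (y i) = a i) \<and>
     a n = a 0"

definition subword ::
  "(nat \<Rightarrow> 'v) \<Rightarrow> (nat \<Rightarrow> int) \<Rightarrow> (nat \<Rightarrow> 'e) \<Rightarrow> nat \<Rightarrow> nat \<Rightarrow> ('v + 'e) letter list" where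
  "subword a k y i j = gpow (Inl (a i)) (k i) @
     concat (map (\<lambda>l. (Inr (y l), False) # gpow (Inl (a l)) (k l)) [Suc i..<Suc j])"

definition kij ::
  "('e \<Rightarrow> int) \<Rightarrow> ('e \<Rightarrow> int) \<Rightarrow> (nat \<Rightarrow> int) \<Rightarrow> (nat \<Rightarrow> 'e) \<Rightarrow> nat \<Rightarrow> nat \<Rightarrow> rat" where
  "kij \<alpha> \<beta> k y i j = (\<Sum>\<nu>=i..j. of_int (k \<nu>) *
      (\<Prod>\<mu>=Suc i..\<nu>. of_int (\<alpha> (y \<mu>)) / of_int (\<beta> (y \<mu>))))"

end

theory Submission
  imports Defs
begin

text \<open>Send a vertex generator to the translation \<open>x \<mapsto> x + 1\<close> and an edge \<open>y\<close> to the
  dilation \<open>x \<mapsto> (\<alpha>\<^sub>y / \<beta>\<^sub>y) x\<close> of \<open>\<rat>\<close>. Both kinds of defining relations of \<open>F(G)\<close>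
  hold for these affine maps, so this is a homomorphism \<open>F(G) \<rightarrow> Aff(\<rat>)\<close>. It sends
  \<open>w\<^sub>i\<^sub>,\<^sub>j\<close> to \<open>x \<mapsto> (\<Prod>\<alpha>\<^sub>\<mu>/\<beta>\<^sub>\<mu>) x + k\<^sub>i\<^sub>,\<^sub>j\<close> and \<open>a\<^sub>i\<^sup>m\<close> to \<open>x \<mapsto> x + m\<close>, so \<open>w\<^sub>i\<^sub>,\<^sub>j = a\<^sub>i\<^sup>m\<close>
  forces \<open>m = k\<^sub>i\<^sub>,\<^sub>j\<close>.\<close>

text \<open>A pair \<open>(s, t)\<close> stands for the affine map \<open>x \<mapsto> s x + t\<close>; \<open>aff_comp\<close> is composition.\<close>

definition aff_comp :: "'a::field \<times> 'a \<Rightarrow> 'a \<times> 'a \<Rightarrow> 'a \<times> 'a" where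
  "aff_comp p q = (fst p * fst q, fst p * snd q + snd p)"

definition aff_inv :: "'a::field \<times> 'a \<Rightarrow> 'a \<times> 'a" where
  "aff_inv p = (1 / fst p, - snd p / fst p)"

lemma aff_comp_assoc: "aff_comp (aff_comp p q) r = aff_comp p (aff_comp q r)"
  by (simp add: aff_comp_def algebra_simps)

lemma aff_comp_id [simp]: "aff_comp p (1, 0) = p" "aff_comp (1, 0) p = p"
  by (auto simp: aff_comp_def)

lemma aff_comp_inv:
  assumes "fst p \<noteq> 0"
  shows "aff_comp p (aff_inv p) = (1, 0)" "aff_comp (aff_inv p) p = (1, 0)"
  using assms by (auto simp: aff_comp_def aff_inv_def field_simps)

definition letter_aff :: "('g \<Rightarrow> 'a::field \<times> 'a) \<Rightarrow> 'g letter \<Rightarrow> 'a \<times> 'a" where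
  "letter_aff h l = (if snd l then aff_inv (h (fst l)) else h (fst l))"

fun word_aff :: "('g \<Rightarrow> 'a::field \<times> 'a) \<Rightarrow> 'g letter list \<Rightarrow> 'a \<times> 'a" where
  "word_aff h [] = (1, 0)"
| "word_aff h (l # w) = aff_comp (letter_aff h l) (word_aff h w)"

lemma word_aff_append: "word_aff h (u @ v) = aff_comp (word_aff h u) (word_aff h v)"
  by (induction u) (simp_all add: aff_comp_assoc)

lemma word_aff_gpow_translation:
  assumes "h x = (1, c)"
  shows "word_aff h (gpow x m) = (1, of_int m * c)"
proof -
  have pos: "word_aff h (replicate n (x, False)) = (1, of_nat n * c)" for n
    by (induction n) (simp_all add: letter_aff_def aff_comp_def assms algebra_simps)
  have neg: "word_aff h (replicate n (x, True)) = (1, - of_nat n * c)" for n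
    by (induction n) (simp_all add: letter_aff_def aff_comp_def aff_inv_def assms algebra_simps)
  show ?thesis
    using pos neg by (simp add: gpow_def)
qed

lemma word_aff_pres_eq:
  assumes "pres_eq R u v"
    and slopes: "\<And>g. fst (h g) \<noteq> 0"
    and relators: "\<And>r. r \<in> R \<Longrightarrow> word_aff h r = (1, 0)"
  shows "word_aff h u = word_aff h v"
  using assms(1)
proof (induction rule: pres_eq.induct)
  case (pe_ctxt u v p q)
  then show ?case by (simp add: word_aff_append)
next
  case (pe_cancel x b)
  then show ?case
    using aff_comp_inv[OF slopes] by (simp add: letter_aff_def)
next
  case (pe_rel r)
  then show ?case using relators by simp
qed simp_all

text \<open>The guard only matters outside \<open>E\<close>: \<open>pe_cancel\<close> applies to every generator, so
  every slope must be invertible.\<close>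

definition gbs_slope :: "('e \<Rightarrow> int) \<Rightarrow> ('e \<Rightarrow> int) \<Rightarrow> 'e \<Rightarrow> rat" where
  "gbs_slope \<alpha> \<beta> e = (if \<alpha> e \<noteq> 0 \<and> \<beta> e \<noteq> 0 then of_int (\<alpha> e) / of_int (\<beta> e) else 1)"

fun gbs_aff :: "('e \<Rightarrow> int) \<Rightarrow> ('e \<Rightarrow> int) \<Rightarrow> 'v + 'e \<Rightarrow> rat \<times> rat" where
  "gbs_aff \<alpha> \<beta> (Inl v) = (1, 1)"
| "gbs_aff \<alpha> \<beta> (Inr e) = (gbs_slope \<alpha> \<beta> e, 0)"

lemma gbs_aff_slope_nonzero: "fst (gbs_aff \<alpha> \<beta> g) \<noteq> 0"
  by (cases g) (simp_all add: gbs_slope_def)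

lemma word_aff_gbs_gpow [simp]: "word_aff (gbs_aff \<alpha> \<beta>) (gpow (Inl v) m) = (1, of_int m)"
  using word_aff_gpow_translation[of "gbs_aff \<alpha> \<beta>" "Inl v" 1] by simp

lemma letter_aff_gbs_edge [simp]:
  "\<alpha> e \<noteq> 0 \<Longrightarrow> \<beta> e \<noteq> 0 \<Longrightarrow>
     letter_aff (gbs_aff \<alpha> \<beta>) (Inr e, False) = (of_int (\<alpha> e) / of_int (\<beta> e), 0)"
  by (simp add: letter_aff_def gbs_slope_def)

lemma word_aff_gbs_rels:
  assumes "gbs_graph V E \<iota> \<tau> bar \<alpha> \<beta>" and "r \<in> gbs_rels E \<iota> \<tau> bar \<alpha> \<beta>"
  shows "word_aff (gbs_aff \<alpha> \<beta>) r = (1, 0)"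
proof -
  from assms(2) obtain e where "e \<in> E" and r:
    "r = [(Inr (bar e), False)] @ [(Inr e, False)] \<or>
     r = [(Inr e, False)] @ gpow (Inl (\<tau> e)) (\<beta> e) @ [(Inr (bar e), False)]
           @ gpow (Inl (\<iota> e)) (- \<alpha> e)"
    unfolding gbs_rels_def by auto
  with assms(1) have "\<alpha> e \<noteq> 0" "\<beta> e \<noteq> 0" "\<alpha> (bar e) = \<beta> e" "\<beta> (bar e) = \<alpha> e"
    unfolding gbs_graph_def by metis+
  with r show ?thesis
    by (auto simp: word_aff_append aff_comp_def)
qed

lemma subword_Suc:
  "i \<le> j \<Longrightarrow> subword a k y i (Suc j) =
     subword a k y i j @ [(Inr (y (Suc j)), False)] @ gpow (Inl (a (Suc j))) (k (Suc j))"
  by (simp add: subword_def)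

lemma kij_Suc:
  "i \<le> j \<Longrightarrow> kij \<alpha> \<beta> k y i (Suc j) = kij \<alpha> \<beta> k y i j +
     of_int (k (Suc j)) * (\<Prod>\<mu>=Suc i..Suc j. of_int (\<alpha> (y \<mu>)) / of_int (\<beta> (y \<mu>)))"
  by (simp add: kij_def sum.nat_ivl_Suc')

lemma word_aff_subword:
  assumes "i \<le> j" and "\<forall>l\<in>{Suc i..j}. \<alpha> (y l) \<noteq> 0 \<and> \<beta> (y l) \<noteq> 0"
  shows "word_aff (gbs_aff \<alpha> \<beta>) (subword a k y i j) =
    ((\<Prod>\<mu>=Suc i..j. of_int (\<alpha> (y \<mu>)) / of_int (\<beta> (y \<mu>))), kij \<alpha> \<beta> k y i j)"
  using assms
proof (induction j rule: dec_induct)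
  case base
  then show ?case by (simp add: subword_def kij_def)
next
  case (step j)
  have prod_Suc: "(\<Prod>\<mu>=Suc i..Suc j. of_int (\<alpha> (y \<mu>)) / of_int (\<beta> (y \<mu>)) :: rat) =
      (\<Prod>\<mu>=Suc i..j. of_int (\<alpha> (y \<mu>)) / of_int (\<beta> (y \<mu>))) *
      (of_int (\<alpha> (y (Suc j))) / of_int (\<beta> (y (Suc j))))"
    using step.hyps by (simp add: prod.nat_ivl_Suc')
  from step show ?case
    by (simp add: subword_Suc kij_Suc word_aff_append prod_Suc aff_comp_def algebra_simps)
qed

theorem lemma3p2:
  fixes V :: "'v set" and E :: "'e set"
    and \<iota> \<tau> :: "'e \<Rightarrow> 'v" and bar :: "'e \<Rightarrow> 'e" and \<alpha> \<beta> :: "'e \<Rightarrow> int"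
    and n :: nat and a :: "nat \<Rightarrow> 'v" and k :: "nat \<Rightarrow> int" and y :: "nat \<Rightarrow> 'e"
    and i j :: nat
  assumes "gbs_graph V E \<iota> \<tau> bar \<alpha> \<beta>"
    and "gbs_factorization V E \<iota> \<tau> n a k y"
    and "i \<le> j" and "j \<le> n"
  shows "(\<exists>m::int. pres_eq (gbs_rels E \<iota> \<tau> bar \<alpha> \<beta>) (subword a k y i j) (gpow (Inl (a i)) m))
     \<longleftrightarrow> (kij \<alpha> \<beta> k y i j \<in> \<int> \<and>
          pres_eq (gbs_rels E \<iota> \<tau> bar \<alpha> \<beta>) (subword a k y i j)
            (gpow (Inl (a i)) \<lfloor>kij \<alpha> \<beta> k y i j\<rfloor>))"
proof (intro iffI)
  assume "\<exists>m. pres_eq (gbs_rels E \<iota> \<tau> bar \<alpha> \<beta>) (subword a k y i j) (gpow (Inl (a i)) m)"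
  then obtain m where m: "pres_eq (gbs_rels E \<iota> \<tau> bar \<alpha> \<beta>) (subword a k y i j) (gpow (Inl (a i)) m)"
    by blast
  have "\<forall>l\<in>{Suc i..j}. \<alpha> (y l) \<noteq> 0 \<and> \<beta> (y l) \<noteq> 0"
    using assms unfolding gbs_graph_def gbs_factorization_def by auto
  then have "snd (word_aff (gbs_aff \<alpha> \<beta>) (subword a k y i j)) = kij \<alpha> \<beta> k y i j"
    by (simp add: word_aff_subword \<open>i \<le> j\<close>)
  moreover have "word_aff (gbs_aff \<alpha> \<beta>) (subword a k y i j) = (1, of_int m)"
    using word_aff_pres_eq[OF m gbs_aff_slope_nonzero word_aff_gbs_rels[OF assms(1)]] by simp
  ultimately have "kij \<alpha> \<beta> k y i j = of_int m"
    by simp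
  with m show "kij \<alpha> \<beta> k y i j \<in> \<int> \<and>
      pres_eq (gbs_rels E \<iota> \<tau> bar \<alpha> \<beta>) (subword a k y i j) (gpow (Inl (a i)) \<lfloor>kij \<alpha> \<beta> k y i j\<rfloor>)"
    by simp
qed blast

end
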